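(* For every $\epsilon>0$ there exists a trigonometric polynomial $f$ on $\mathbb T^2$ such that $$\|P_xP_yf\|_1+\|(I-P_xP_y)f\|_1\le\epsilon\,|||f|||.$$
   Context: $\mathbb T=\mathbb R/2\pi\mathbb Z$ carries normalized Lebesgue measure, and points of $\mathbb T^2$ are written $(x,y)$. For $f\in L^2(\mathbb T^2)$ with Fourier coefficients $\hat f(m,n)$: - $P_x$ is the orthogonal projection onto $H^2_x=\{\hat f(m,n)=0 \text{ for } m<0\}$, and $P_{-x}=I-P_x$; - $P_y$ is the orthogonal projection onto $H^2_y=\{\hat f(m,n)=0 \text{ for } n<0\}$, and $P_{-y}=I-P_y$. For a trigonometric polynomial $f$ on $\mathbb T^2$ set $$|||f|||_{(x)}=\|P_xf\|_1+\|P_{-x}P_yf\|_1+\|P_{-x}P_{-y}f\|_1,\qquad |||f|||_{(y)}=\|P_yf\|_1+\|P_{-y}P_xf\|_1+\|P_{-y}P_{-x}f\|_1,$$ and $$|||f|||=\inf\{|||g|||_{(x)}+|||h|||_{(y)}: f=g+h,\ g,h \text{ trigonometric polynomials}\}.$$ *)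

theory Defs
  imports "HOL-Analysis.Analysis"
begin

text \<open>A trigonometric polynomial on the 2-torus is represented by its
  Fourier coefficient function (finitely supported).\<close>

type_synonym tpoly = "int \<times> int \<Rightarrow> complex"

definition trig_poly :: "tpoly \<Rightarrow> bool" where
  "trig_poly c \<longleftrightarrow> finite {k. c k \<noteq> 0}"

definition tp_eval :: "tpoly \<Rightarrow> real \<times> real \<Rightarrow> complex" where
  "tp_eval c p = (\<Sum>k\<in>{k. c k \<noteq> 0}.
     c k * exp (\<i> * of_real (of_int (fst k) * fst p + of_int (snd k) * snd p)))"

definition L1norm :: "tpoly \<Rightarrow> real" where
  "L1norm c = integral (cbox (0,0) (2*pi, 2*pi)) (\<lambda>p. norm (tp_eval c p)) / (4 * pi\<^sup>2)"

definition Px :: "tpoly \<Rightarrow> tpoly" where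
  "Px c = (\<lambda>(m,n). if m \<ge> 0 then c (m,n) else 0)"
definition Pmx :: "tpoly \<Rightarrow> tpoly" where
  "Pmx c = (\<lambda>(m,n). if m < 0 then c (m,n) else 0)"
definition Py :: "tpoly \<Rightarrow> tpoly" where
  "Py c = (\<lambda>(m,n). if n \<ge> 0 then c (m,n) else 0)"
definition Pmy :: "tpoly \<Rightarrow> tpoly" where
  "Pmy c = (\<lambda>(m,n). if n < 0 then c (m,n) else 0)"

definition norm_x :: "tpoly \<Rightarrow> real" where
  "norm_x f = L1norm (Px f) + L1norm (Pmx (Py f)) + L1norm (Pmx (Pmy f))"

definition norm_y :: "tpoly \<Rightarrow> real" where
  "norm_y f = L1norm (Py f) + L1norm (Pmy (Px f)) + L1norm (Pmy (Pmx f))"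

definition triple_norm :: "tpoly \<Rightarrow> real" where
  "triple_norm f = Inf {norm_x g + norm_y h | g h.
      trig_poly g \<and> trig_poly h \<and> f = (\<lambda>k. g k + h k)}"

end

theory Submission
  imports Defs
begin

text \<open>The test polynomial is the autocorrelation \<open>f\<close> of the antidiagonal segment
  \<open>{(m, -m) | 0 \<le> m \<le> N}\<close>, that is, \<open>N + 1\<close> times the Fejer kernel in the variable \<open>x - y\<close>.
  Being nonnegative, it has \<open>L1norm f = f(0) = N + 1\<close>, and being carried by the antidiagonal,
  \<open>Px (Py f)\<close> is its constant term; so the left-hand side is at most \<open>3 (N + 1)\<close>.

  For the lower bound on the triple norm consider the functional
  \<open>\<Lambda> u = (\<Sum>j = 1..N. (u(j, -j) + u(-j, j)) / j)\<close>. If the spectrum of \<open>u\<close> meets only one half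
  of the antidiagonal, \<open>\<Lambda> u\<close> is up to sign the pairing of \<open>u\<close> with a partial sum of the sawtooth
  series in \<open>x - y\<close>, which is bounded by 6 uniformly in \<open>N\<close>; hence \<open>|\<Lambda> u| \<le> 6 L1norm u\<close>.
  Each of the six pieces in \<open>norm_x g\<close> and \<open>norm_y h\<close> either has this property or misses the
  antidiagonal, so \<open>|\<Lambda> f| \<le> 6 triple_norm f\<close>. On the other hand \<open>\<Lambda> f \<ge> (N + 1) (H\<^sub>N - 1)\<close>,
  and the harmonic numbers \<open>H\<^sub>N\<close> are unbounded.\<close>

section \<open>Fourier analysis of trigonometric polynomials on the torus\<close>

definition torus_char :: "int \<times> int \<Rightarrow> real \<times> real \<Rightarrow> complex" where
  "torus_char k p = exp (\<i> * of_real (of_int (fst k) * fst p + of_int (snd k) * snd p))"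

abbreviation torus_box :: "(real \<times> real) set" where
  "torus_box \<equiv> cbox (0, 0) (2 * pi, 2 * pi)"

abbreviation supp :: "tpoly \<Rightarrow> (int \<times> int) set" where
  "supp c \<equiv> {k. c k \<noteq> 0}"

lemma tp_eval_eq_sum:
  assumes "finite S" "supp c \<subseteq> S"
  shows "tp_eval c p = (\<Sum>k\<in>S. c k * torus_char k p)"
  unfolding tp_eval_def torus_char_def
  by (rule sum.mono_neutral_left) (use assms in auto)

lemma torus_char_add: "torus_char k p * torus_char j p = torus_char (k + j) p"
  by (simp add: torus_char_def exp_add[symmetric] algebra_simps)

lemma continuous_on_torus_char [continuous_intros]: "continuous_on A (torus_char k)"
  unfolding torus_char_def by (intro continuous_intros)

lemma continuous_on_tp_eval [continuous_intros]: "continuous_on A (tp_eval c)"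
proof -
  have "tp_eval c = (\<lambda>p. \<Sum>k\<in>supp c. c k * torus_char k p)"
    by (auto simp: tp_eval_def torus_char_def fun_eq_iff)
  then show ?thesis
    by (simp add: continuous_on_sum continuous_on_mult continuous_on_torus_char)
qed

lemma integral_exp_int_mult:
  "integral {0..2 * pi} (\<lambda>x. exp (\<i> * of_real (of_int m * x))) = (if m = 0 then 2 * pi else 0)"
proof (cases "m = 0")
  case True
  then show ?thesis by (simp add: scaleR_conv_of_real)
next
  case False
  have "integral {0..2 * pi} (\<lambda>x. exp ((\<i> * of_int m) * complex_of_real x))
      = (exp ((\<i> * of_int m) * of_real (2 * pi)) - 1) / (\<i> * of_int m)"
    by (rule integral_exp) (use False in auto)
  moreover have "exp ((\<i> * of_int m) * of_real (2 * pi)) = 1"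
  proof -
    have "(\<i> * of_int m) * of_real (2 * pi) = \<i> * (of_int m * (of_real pi * 2))"
      by (simp add: algebra_simps)
    then show ?thesis by (simp only: exp_2pi_1_int)
  qed
  ultimately show ?thesis
    using False by (simp add: algebra_simps)
qed

lemma integral_torus_char:
  "integral torus_box (torus_char k) = (if k = (0,0) then of_real (4 * pi\<^sup>2) else 0)"
proof -
  obtain m n where k: "k = (m, n)" by fastforce
  define e where "e l x = exp (\<i> * of_real (of_int l * x))" for l :: int and x :: real
  have "integral torus_box (torus_char k)
      = integral {0..2 * pi} (\<lambda>x. integral {0..2 * pi} (\<lambda>y. e m x * e n y))"
    using integral_prod_continuous[OF continuous_on_torus_char]
    by (simp add: torus_char_def e_def k exp_add[symmetric] algebra_simps)
  also have "\<dots> = integral {0..2 * pi} (e m) * integral {0..2 * pi} (e n)"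
    by (simp add: integral_mult_left integral_mult_right)
  also have "\<dots> = (if k = (0,0) then of_real (4 * pi\<^sup>2) else 0)"
    unfolding e_def integral_exp_int_mult by (simp add: k power2_eq_square)
  finally show ?thesis .
qed

lemma integral_sum_torus_char:
  assumes "finite I"
  shows "integral torus_box (\<lambda>p. \<Sum>i\<in>I. d i * torus_char (\<phi> i) p)
       = of_real (4 * pi\<^sup>2) * (\<Sum>i\<in>I. if \<phi> i = (0,0) then d i else 0)"
proof -
  have "integral torus_box (\<lambda>p. \<Sum>i\<in>I. d i * torus_char (\<phi> i) p)
      = (\<Sum>i\<in>I. d i * integral torus_box (torus_char (\<phi> i)))"
    by (subst integral_sum)
       (auto intro!: integrable_continuous continuous_intros simp: assms integral_mult_right)
  also have "\<dots> = of_real (4 * pi\<^sup>2) * (\<Sum>i\<in>I. if \<phi> i = (0,0) then d i else 0)"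
    unfolding integral_torus_char sum_distrib_left by (intro sum.cong) auto
  finally show ?thesis .
qed

lemma integral_tp_eval:
  assumes "trig_poly c"
  shows "integral torus_box (tp_eval c) = of_real (4 * pi\<^sup>2) * c (0,0)"
proof -
  have fin: "finite (insert (0,0) (supp c))"
    using assms by (simp add: trig_poly_def)
  have "tp_eval c = (\<lambda>p. \<Sum>k\<in>insert (0,0) (supp c). c k * torus_char k p)"
    by (rule ext) (simp add: tp_eval_eq_sum[OF fin subset_insertI])
  then show ?thesis
    using integral_sum_torus_char[OF fin, where d = c and \<phi> = "\<lambda>k. k"] fin
    by (simp add: sum.delta)
qed

lemma integrable_norm_tp_eval: "(\<lambda>p. norm (tp_eval c p)) integrable_on torus_box"
  by (intro integrable_continuous continuous_intros)

lemma L1norm_nonneg: "L1norm c \<ge> 0"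
  unfolding L1norm_def
  by (intro divide_nonneg_nonneg integral_nonneg integrable_norm_tp_eval) auto

lemma norm_coeff_zero_le_L1norm:
  assumes "trig_poly c"
  shows "norm (c (0,0)) \<le> L1norm c"
proof -
  have "4 * pi\<^sup>2 * norm (c (0,0)) = norm (integral torus_box (tp_eval c))"
    by (simp add: integral_tp_eval[OF assms] norm_mult norm_power)
  also have "\<dots> \<le> integral torus_box (\<lambda>p. norm (tp_eval c p))"
    by (intro integral_norm_bound_integral integrable_continuous integrable_norm_tp_eval
        continuous_intros) auto
  finally show ?thesis
    by (simp add: L1norm_def field_simps)
qed

lemma L1norm_eq_coeff_zero_if_nonneg:
  assumes c: "trig_poly c" and nonneg: "\<And>p. tp_eval c p = of_real (norm (tp_eval c p))"
  shows "L1norm c = norm (c (0,0))"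
proof -
  define I where "I = integral torus_box (\<lambda>p. norm (tp_eval c p))"
  have "((\<lambda>p. complex_of_real (norm (tp_eval c p))) has_integral of_real I) torus_box"
    unfolding I_def by (rule has_integral_of_real[OF integrable_integral[OF integrable_norm_tp_eval]])
  then have "(tp_eval c has_integral of_real I) torus_box"
    by (simp only: nonneg[symmetric])
  then have "of_real I = of_real (4 * pi\<^sup>2) * c (0,0)"
    using integral_tp_eval[OF c] integral_unique by metis
  then have "norm (complex_of_real I) = 4 * pi\<^sup>2 * norm (c (0,0))"
    by (simp add: norm_mult norm_power)
  moreover have "I \<ge> 0"
    unfolding I_def by (intro integral_nonneg integrable_norm_tp_eval) auto
  ultimately show ?thesis
    by (simp add: L1norm_def I_def)
qed

lemma integral_tp_eval_mult:
  assumes u: "trig_poly u" and a: "trig_poly a"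
  shows "integral torus_box (\<lambda>p. tp_eval u p * tp_eval a p)
       = of_real (4 * pi\<^sup>2) * (\<Sum>k\<in>supp u. u k * a (- k))"
proof -
  have fu: "finite (supp u)" and fa: "finite (supp a)"
    using u a by (auto simp: trig_poly_def)
  define I where "I = supp u \<times> supp a"
  have fI: "finite I"
    using fu fa by (simp add: I_def)
  have "tp_eval u p * tp_eval a p = (\<Sum>k\<in>supp u. \<Sum>j\<in>supp a. (u k * a j) * torus_char (k + j) p)"
    for p
    unfolding tp_eval_eq_sum[OF fu order_refl] tp_eval_eq_sum[OF fa order_refl] sum_product
    by (simp add: torus_char_add[symmetric] algebra_simps)
  then have "tp_eval u p * tp_eval a p = (\<Sum>i\<in>I. (u (fst i) * a (snd i)) * torus_char (fst i + snd i) p)"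
    for p
    by (simp add: I_def sum.cartesian_product case_prod_beta)
  then have "integral torus_box (\<lambda>p. tp_eval u p * tp_eval a p)
      = of_real (4 * pi\<^sup>2) * (\<Sum>i\<in>I. if fst i + snd i = (0,0) then u (fst i) * a (snd i) else 0)"
    by (simp only: integral_sum_torus_char[OF fI])
  also have "(\<Sum>i\<in>I. if fst i + snd i = (0,0) then u (fst i) * a (snd i) else 0)
      = (\<Sum>k\<in>supp u. \<Sum>j\<in>supp a. if j = - k then u k * a j else 0)"
    unfolding I_def sum.cartesian_product
    by (intro sum.cong refl) (auto simp: zero_prod_def[symmetric] add_eq_0_iff)
  also have "\<dots> = (\<Sum>k\<in>supp u. u k * a (- k))"
    using fa by (intro sum.cong refl) (auto simp: sum.delta')
  finally show ?thesis .
qed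

lemma norm_pairing_le:
  assumes u: "trig_poly u" and a: "trig_poly a" and bound: "\<And>p. norm (tp_eval a p) \<le> M"
  shows "norm (\<Sum>k\<in>supp u. u k * a (- k)) \<le> M * L1norm u"
proof -
  have "4 * pi\<^sup>2 * norm (\<Sum>k\<in>supp u. u k * a (- k))
      = norm (integral torus_box (\<lambda>p. tp_eval u p * tp_eval a p))"
    by (simp add: integral_tp_eval_mult[OF u a] norm_mult norm_power)
  also have "\<dots> \<le> integral torus_box (\<lambda>p. M * norm (tp_eval u p))"
  proof (rule integral_norm_bound_integral)
    show "(\<lambda>p. tp_eval u p * tp_eval a p) integrable_on torus_box"
      "(\<lambda>p. M * norm (tp_eval u p)) integrable_on torus_box"
      by (intro integrable_continuous continuous_intros)+
    show "norm (tp_eval u p * tp_eval a p) \<le> M * norm (tp_eval u p)" for p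
      using bound[of p] by (simp add: norm_mult mult_right_mono mult.commute)
  qed
  also have "\<dots> = M * (4 * pi\<^sup>2 * L1norm u)"
    by (simp add: L1norm_def)
  finally show ?thesis
    by (simp add: algebra_simps)
qed

lemma tp_eval_diff:
  assumes "trig_poly u" "trig_poly v"
  shows "tp_eval (\<lambda>k. u k - v k) p = tp_eval u p - tp_eval v p"
proof -
  have fin: "finite (supp u \<union> supp v)"
    using assms by (simp add: trig_poly_def)
  show ?thesis
    by (subst (1 2 3) tp_eval_eq_sum[OF fin]) (auto simp: sum_subtractf algebra_simps)
qed

lemma L1norm_diff_le:
  assumes "trig_poly u" "trig_poly v"
  shows "L1norm (\<lambda>k. u k - v k) \<le> L1norm u + L1norm v"
proof -
  have "integral torus_box (\<lambda>p. norm (tp_eval (\<lambda>k. u k - v k) p))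
      \<le> integral torus_box (\<lambda>p. norm (tp_eval u p) + norm (tp_eval v p))"
    by (intro integral_le integrable_norm_tp_eval integrable_add)
       (simp add: tp_eval_diff[OF assms] norm_triangle_ineq4)
  also have "\<dots> = integral torus_box (\<lambda>p. norm (tp_eval u p)) + integral torus_box (\<lambda>p. norm (tp_eval v p))"
    by (intro integral_add integrable_norm_tp_eval)
  finally show ?thesis
    unfolding L1norm_def add_divide_distrib[symmetric] by (rule divide_right_mono) simp
qed

lemma L1norm_const: "L1norm (\<lambda>k. if k = (0,0) then z else 0) = norm z"
proof -
  have "tp_eval (\<lambda>k. if k = (0,0) then z else 0) p = z" for p
    by (subst tp_eval_eq_sum[where S = "{(0,0)}"]) (auto simp: torus_char_def)
  then show ?thesis
    by (simp add: L1norm_def power2_eq_square content_Pair)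
qed

lemma Px_Py_antidiagonal:
  assumes "\<And>m n. c (m, n) \<noteq> 0 \<Longrightarrow> n = - m"
  shows "Px (Py c) = (\<lambda>k. if k = (0,0) then c (0,0) else 0)"
proof
  fix k :: "int \<times> int"
  obtain m n where k: "k = (m, n)" by fastforce
  show "Px (Py c) k = (if k = (0,0) then c (0,0) else 0)"
    using assms[of m n] by (cases "c (m, n) = 0") (auto simp: k Px_def Py_def)
qed

lemma L1norm_Px_Py_antidiagonal_le:
  assumes c: "trig_poly c" and antidiagonal: "\<And>m n. c (m, n) \<noteq> 0 \<Longrightarrow> n = - m"
  shows "L1norm (Px (Py c)) + L1norm (\<lambda>k. c k - Px (Py c) k) \<le> 3 * L1norm c"
proof -
  have "trig_poly (\<lambda>k. if k = (0,0) then c (0,0) else 0)"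
    unfolding trig_poly_def by (rule finite_subset[of _ "{(0,0)}"]) auto
  from L1norm_diff_le[OF c this]
  have "L1norm (\<lambda>k. c k - Px (Py c) k) \<le> L1norm c + norm (c (0,0))"
    by (simp add: Px_Py_antidiagonal[OF antidiagonal] L1norm_const)
  then show ?thesis
    using norm_coeff_zero_le_L1norm[OF c]
    by (simp add: Px_Py_antidiagonal[OF antidiagonal] L1norm_const)
qed

section \<open>Bounded partial sums of the sawtooth series\<close>

lemma abs_sin_nat_mult_le: "\<bar>sin (real n * x)\<bar> \<le> real n * \<bar>sin x\<bar>"
proof (induction n)
  case 0
  then show ?case by simp
next
  case (Suc n)
  have "sin (real (Suc n) * x) = sin (real n * x) * cos x + cos (real n * x) * sin x"
    by (simp add: distrib_right sin_add)
  also have "\<bar>\<dots>\<bar> \<le> \<bar>sin (real n * x)\<bar> * \<bar>cos x\<bar> + \<bar>cos (real n * x)\<bar> * \<bar>sin x\<bar>"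
    by (metis abs_mult abs_triangle_ineq)
  also have "\<dots> \<le> \<bar>sin (real n * x)\<bar> + \<bar>sin x\<bar>"
    using mult_left_le[of "\<bar>cos x\<bar>" "\<bar>sin (real n * x)\<bar>"]
      mult_left_le_one_le[of "\<bar>sin x\<bar>" "\<bar>cos (real n * x)\<bar>"]
    by (simp add: abs_cos_le_one)
  also have "\<dots> \<le> real (Suc n) * \<bar>sin x\<bar>"
    using Suc by (simp add: algebra_simps)
  finally show ?case .
qed

lemma abs_sum_diff_div_le:
  fixes c :: "nat \<Rightarrow> real"
  assumes c: "\<And>j. \<bar>c j\<bar> \<le> 1" and a: "a \<ge> 1"
  shows "\<bar>\<Sum>j\<in>{a..N}. (c (j - 1) - c j) / real j\<bar> \<le> 2 / real a"
proof -
  have summed_by_parts: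
    "\<bar>(\<Sum>j\<in>{a..N}. (c (j - 1) - c j) / real j) + c N / real N\<bar> \<le> 2 / real a - 1 / real N"
    if "a \<le> N" for N
    using that
  proof (induction N rule: dec_induct)
    case base
    have "(c (a - 1) - c a) / real a + c a / real a = c (a - 1) / real a"
      by (simp add: diff_divide_distrib)
    then show ?case
      using c[of "a - 1"] a by (simp add: abs_div divide_right_mono)
  next
    case (step n)
    have d: "0 \<le> 1 / real n - 1 / real (Suc n)"
      using step a by (simp add: field_simps)
    have "(\<Sum>j\<in>{a..Suc n}. (c (j - 1) - c j) / real j) + c (Suc n) / real (Suc n)
        = ((\<Sum>j\<in>{a..n}. (c (j - 1) - c j) / real j) + c n / real n)
          - c n * (1 / real n - 1 / real (Suc n))"
      using step.hyps by (simp add: diff_divide_distrib right_diff_distrib)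
    moreover have "\<bar>c n * (1 / real n - 1 / real (Suc n))\<bar> \<le> 1 / real n - 1 / real (Suc n)"
      using c[of n] d by (simp add: abs_mult mult_left_le_one_le)
    ultimately show ?case
      using step.IH by (smt (verit))
  qed
  show ?thesis
  proof (cases "a \<le> N")
    case True
    then have "\<bar>c N / real N\<bar> \<le> 1 / real N"
      using c[of N] a by (simp add: abs_div divide_right_mono)
    then show ?thesis
      using summed_by_parts[OF True] by (smt (verit))
  qed simp
qed

lemma abs_sum_sin_div_tail_le:
  assumes a: "a \<ge> 1" and s: "sin (t / 2) \<noteq> 0"
  shows "\<bar>\<Sum>j\<in>{a..N}. sin (real j * t) / real j\<bar> \<le> 1 / (real a * \<bar>sin (t / 2)\<bar>)"
proof -
  define c where "c j = cos ((real j + 1 / 2) * t)" for j :: nat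
  have telescoping: "2 * sin (t / 2) * sin (real j * t) = c (j - 1) - c j" if "j \<ge> 1" for j
  proof -
    have "c (j - 1) - c j = cos ((real j - 1 / 2) * t) - cos ((real j + 1 / 2) * t)"
      using that by (simp add: c_def of_nat_diff algebra_simps)
    also have "\<dots> = 2 * sin (real j * t) * sin (t / 2)"
      by (subst cos_diff_cos) (simp add: algebra_simps add_divide_distrib)
    finally show ?thesis by simp
  qed
  have "2 * sin (t / 2) * (\<Sum>j\<in>{a..N}. sin (real j * t) / real j)
      = (\<Sum>j\<in>{a..N}. (c (j - 1) - c j) / real j)"
    unfolding sum_distrib_left
    by (intro sum.cong refl) (use a telescoping in \<open>auto simp: field_simps\<close>)
  also have "\<bar>\<dots>\<bar> \<le> 2 / real a"
    using a by (intro abs_sum_diff_div_le) (auto simp: c_def)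
  finally have "2 * \<bar>sin (t / 2)\<bar> * \<bar>\<Sum>j\<in>{a..N}. sin (real j * t) / real j\<bar> \<le> 2 / real a"
    by (simp add: abs_mult)
  then show ?thesis
    using s a by (simp add: field_simps)
qed

text \<open>Split the sum at \<open>m \<approx> 1 / \<bar>sin (t/2)\<bar>\<close>: the head is bounded termwise by
  \<open>\<bar>sin (j t)\<bar> \<le> 2 j \<bar>sin (t/2)\<bar>\<close>, the tail by Abel summation.\<close>
lemma abs_sum_sin_div_le_3: "\<bar>\<Sum>j\<in>{1..N}. sin (real j * t) / real j\<bar> \<le> 3"
proof (cases "sin (t / 2) = 0")
  case True
  then have "sin (real j * t) = 0" for j
    using abs_sin_nat_mult_le[of "2 * j" "t / 2"] by simp
  then show ?thesis by simp
next
  case False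
  define s where "s = \<bar>sin (t / 2)\<bar>"
  have s0: "s > 0"
    using False by (simp add: s_def)
  define m where "m = min N (nat \<lfloor>1 / s\<rfloor>)"
  have ms: "real m * s \<le> 1"
  proof -
    have "real (nat \<lfloor>1 / s\<rfloor>) \<le> 1 / s"
      using s0 by (simp add: of_nat_nat)
    then have "real m \<le> 1 / s"
      unfolding m_def by (meson min.cobounded2 of_nat_le_iff order.trans)
    then show ?thesis
      using s0 by (simp add: field_simps)
  qed
  have "{1..N} = {1..m} \<union> {m + 1..N}"
    by (auto simp: m_def)
  then have split: "(\<Sum>j\<in>{1..N}. sin (real j * t) / real j)
      = (\<Sum>j\<in>{1..m}. sin (real j * t) / real j) + (\<Sum>j\<in>{m + 1..N}. sin (real j * t) / real j)"
    by (simp add: sum.union_disjoint)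
  have "\<bar>\<Sum>j\<in>{1..m}. sin (real j * t) / real j\<bar> \<le> (\<Sum>j\<in>{1..m}. 2 * s)"
  proof (rule order_trans[OF sum_abs sum_mono])
    fix j assume j: "j \<in> {1..m}"
    have "\<bar>sin (real j * t)\<bar> \<le> real j * (2 * s)"
      using abs_sin_nat_mult_le[of "2 * j" "t / 2"] by (simp add: s_def algebra_simps)
    then show "\<bar>sin (real j * t) / real j\<bar> \<le> 2 * s"
      using j by (simp add: abs_div field_simps)
  qed
  also have "\<dots> \<le> 2"
    using ms by simp
  finally have head: "\<bar>\<Sum>j\<in>{1..m}. sin (real j * t) / real j\<bar> \<le> 2" .
  have tail: "\<bar>\<Sum>j\<in>{m + 1..N}. sin (real j * t) / real j\<bar> \<le> 1"
  proof (cases "m < N")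
    case True
    then have "m = nat \<lfloor>1 / s\<rfloor>"
      by (simp add: m_def)
    then have "real (m + 1) > 1 / s"
      by linarith
    then have "real (m + 1) * s > 1"
      using s0 by (simp add: field_simps)
    moreover have "\<bar>\<Sum>j\<in>{m + 1..N}. sin (real j * t) / real j\<bar> \<le> 1 / (real (m + 1) * s)"
      unfolding s_def by (rule abs_sum_sin_div_tail_le) (use False in auto)
    ultimately show ?thesis
      by (smt (verit) divide_le_eq_1)
  qed simp
  show ?thesis
    unfolding split using head tail by linarith
qed

section \<open>A functional on the antidiagonal bounded by the triple norm\<close>

lemma sum_nonzero_int_interval:
  "(\<Sum>m\<in>{- int N..int N} - {0}. g m) = (\<Sum>j\<in>{1..N}. g (int j) + g (- int j))"
proof -
  have "{- int N..int N} - {0} = int ` {1..N} \<union> (\<lambda>j. - int j) ` {1..N}"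
  proof (intro equalityI subsetI)
    fix m assume "m \<in> {- int N..int N} - {0}"
    then show "m \<in> int ` {1..N} \<union> (\<lambda>j. - int j) ` {1..N}"
      by (cases "m > 0") (auto intro!: image_eqI[of _ _ "nat \<bar>m\<bar>"])
  qed auto
  moreover have "int ` {1..N} \<inter> (\<lambda>j. - int j) ` {1..N} = {}"
    by auto
  ultimately show ?thesis
    by (simp add: sum.union_disjoint sum.reindex inj_on_def sum.distrib)
qed

text \<open>A partial sum of the Fourier series of the sawtooth wave, as a function of \<open>x - y\<close>.\<close>
definition sawtooth_poly :: "nat \<Rightarrow> tpoly" where
  "sawtooth_poly N = (\<lambda>(m, n). if n = - m \<and> m \<in> {- int N..int N} - {0} then - 1 / of_int m else 0)"

lemma supp_sawtooth_poly:
  "supp (sawtooth_poly N) \<subseteq> (\<lambda>m. (m, - m)) ` ({- int N..int N} - {0})"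
  by (auto simp: sawtooth_poly_def split: if_splits)

lemma trig_poly_sawtooth_poly: "trig_poly (sawtooth_poly N)"
  unfolding trig_poly_def by (rule finite_subset[OF supp_sawtooth_poly]) simp

lemma tp_eval_sawtooth_poly:
  "tp_eval (sawtooth_poly N) p
     = - 2 * \<i> * of_real (\<Sum>j\<in>{1..N}. sin (real j * (fst p - snd p)) / real j)"
proof -
  define t where "t = fst p - snd p"
  define e where "e m = exp (\<i> * of_real (of_int m * t))" for m :: int
  have "tp_eval (sawtooth_poly N) p
      = (\<Sum>k\<in>(\<lambda>m. (m, - m)) ` ({- int N..int N} - {0}). sawtooth_poly N k * torus_char k p)"
    by (rule tp_eval_eq_sum[OF _ supp_sawtooth_poly]) simp
  also have "\<dots> = (\<Sum>m\<in>{- int N..int N} - {0}. - e m / of_int m)"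
    by (subst sum.reindex) (auto simp: inj_on_def sawtooth_poly_def torus_char_def e_def t_def
        algebra_simps intro!: sum.cong)
  also have "\<dots> = (\<Sum>j\<in>{1..N}. (e (- int j) - e (int j)) / of_nat j)"
    unfolding sum_nonzero_int_interval by (intro sum.cong refl) (simp add: diff_divide_distrib)
  also have "\<dots> = (\<Sum>j\<in>{1..N}. - 2 * \<i> * of_real (sin (real j * t) / real j))"
  proof (intro sum.cong refl)
    fix j :: nat
    have "e (- int j) - e (int j) = cis (- (real j * t)) - cis (real j * t)"
      by (simp add: e_def cis_conv_exp)
    also have "\<dots> = - 2 * \<i> * of_real (sin (real j * t))"
      by (simp add: complex_eq_iff)
    finally show "(e (- int j) - e (int j)) / of_nat j = - 2 * \<i> * of_real (sin (real j * t) / real j)"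
      by simp
  qed
  finally show ?thesis
    by (simp add: t_def sum_distrib_left)
qed

lemma norm_tp_eval_sawtooth_poly_le: "norm (tp_eval (sawtooth_poly N) p) \<le> 6"
  using abs_sum_sin_div_le_3[where N = N and t = "fst p - snd p"]
  unfolding tp_eval_sawtooth_poly norm_mult norm_of_real by simp

lemma pairing_sawtooth_poly:
  assumes u: "trig_poly u"
  shows "(\<Sum>k\<in>supp u. u k * sawtooth_poly N (- k))
       = (\<Sum>j\<in>{1..N}. (u (int j, - int j) - u (- int j, int j)) / of_nat j)"
proof -
  define W where "W = (\<lambda>m. (m, - m)) ` ({- int N..int N} - {0})"
  have fin: "finite (supp u)" "finite W"
    using u by (auto simp: trig_poly_def W_def)
  have outside: "sawtooth_poly N (- k) = 0" if "k \<notin> W" for k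
  proof (rule ccontr)
    obtain m n where k: "k = (m, n)" by fastforce
    assume "sawtooth_poly N (- k) \<noteq> 0"
    then have "k = (m, - m)" "m \<in> {- int N..int N} - {0}"
      by (auto simp: k sawtooth_poly_def split: if_splits)
    then show False
      using that by (auto simp: W_def)
  qed
  have "(\<Sum>k\<in>supp u. u k * sawtooth_poly N (- k)) = (\<Sum>k\<in>supp u \<union> W. u k * sawtooth_poly N (- k))"
    by (rule sum.mono_neutral_left) (use fin in auto)
  also have "\<dots> = (\<Sum>k\<in>W. u k * sawtooth_poly N (- k))"
    by (rule sum.mono_neutral_right) (use fin outside in auto)
  also have "\<dots> = (\<Sum>m\<in>{- int N..int N} - {0}. u (m, - m) / of_int m)"
    unfolding W_def
    by (subst sum.reindex) (auto simp: inj_on_def sawtooth_poly_def intro!: sum.cong)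
  also have "\<dots> = (\<Sum>j\<in>{1..N}. (u (int j, - int j) - u (- int j, int j)) / of_nat j)"
    unfolding sum_nonzero_int_interval by (intro sum.cong refl) (simp add: diff_divide_distrib)
  finally show ?thesis .
qed

definition antidiag_functional :: "nat \<Rightarrow> tpoly \<Rightarrow> complex" where
  "antidiag_functional N u = (\<Sum>j\<in>{1..N}. (u (int j, - int j) + u (- int j, int j)) / of_nat j)"

lemma antidiag_functional_add:
  "antidiag_functional N (\<lambda>k. g k + h k) = antidiag_functional N g + antidiag_functional N h"
  unfolding antidiag_functional_def by (simp add: sum.distrib[symmetric] add_divide_distrib algebra_simps)

text \<open>On each half of the antidiagonal the functional is, up to sign, the pairing with the
  sawtooth polynomial, whose sup norm is bounded independently of \<open>N\<close>.\<close>
lemma norm_antidiag_functional_le: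
  assumes u: "trig_poly u" and half: "(\<forall>m<0. u (m, - m) = 0) \<or> (\<forall>m>0. u (m, - m) = 0)"
  shows "norm (antidiag_functional N u) \<le> 6 * L1norm u"
proof -
  have "norm (antidiag_functional N u) = norm (\<Sum>k\<in>supp u. u k * sawtooth_poly N (- k))"
    unfolding pairing_sawtooth_poly[OF u]
  proof (use half in \<open>elim disjE\<close>)
    assume neg: "\<forall>m<0. u (m, - m) = 0"
    have "u (- int j, int j) = 0" if "j \<ge> 1" for j
      using neg[rule_format, of "- int j"] that by simp
    then show "norm (antidiag_functional N u)
        = norm (\<Sum>j\<in>{1..N}. (u (int j, - int j) - u (- int j, int j)) / of_nat j)"
      unfolding antidiag_functional_def by (intro arg_cong[where f = norm] sum.cong refl) auto
  next
    assume "\<forall>m>0. u (m, - m) = 0"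
    then have "antidiag_functional N u
        = - (\<Sum>j\<in>{1..N}. (u (int j, - int j) - u (- int j, int j)) / of_nat j)"
      unfolding antidiag_functional_def sum_negf[symmetric] by (intro sum.cong refl) auto
    then show "norm (antidiag_functional N u)
        = norm (\<Sum>j\<in>{1..N}. (u (int j, - int j) - u (- int j, int j)) / of_nat j)"
      by simp
  qed
  also have "\<dots> \<le> 6 * L1norm u"
    by (rule norm_pairing_le[OF u trig_poly_sawtooth_poly norm_tp_eval_sawtooth_poly_le])
  finally show ?thesis .
qed

lemma trig_poly_Px: "trig_poly c \<Longrightarrow> trig_poly (Px c)"
  and trig_poly_Pmx: "trig_poly c \<Longrightarrow> trig_poly (Pmx c)"
  and trig_poly_Py: "trig_poly c \<Longrightarrow> trig_poly (Py c)"
  and trig_poly_Pmy: "trig_poly c \<Longrightarrow> trig_poly (Pmy c)"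
  unfolding trig_poly_def
  by (rule finite_subset[of _ "supp c"]; force simp: Px_def Pmx_def Py_def Pmy_def split: if_splits)+

lemma norm_antidiag_functional_le_norm_x:
  assumes g: "trig_poly g"
  shows "norm (antidiag_functional N g) \<le> 6 * norm_x g"
proof -
  have "antidiag_functional N g = antidiag_functional N (Px g) + antidiag_functional N (Pmx (Py g))"
    unfolding antidiag_functional_def sum.distrib[symmetric]
    by (intro sum.cong refl) (auto simp: Px_def Pmx_def Py_def add_divide_distrib)
  also have "norm \<dots> \<le> 6 * L1norm (Px g) + 6 * L1norm (Pmx (Py g))"
    by (intro norm_triangle_le add_mono norm_antidiag_functional_le trig_poly_Px trig_poly_Pmx
        trig_poly_Py g) (auto simp: Px_def Pmx_def Py_def)
  also have "\<dots> \<le> 6 * norm_x g"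
    using L1norm_nonneg[of "Pmx (Pmy g)"] by (simp add: norm_x_def)
  finally show ?thesis .
qed

lemma norm_antidiag_functional_le_norm_y:
  assumes h: "trig_poly h"
  shows "norm (antidiag_functional N h) \<le> 6 * norm_y h"
proof -
  have "antidiag_functional N h = antidiag_functional N (Py h) + antidiag_functional N (Pmy (Px h))"
    unfolding antidiag_functional_def sum.distrib[symmetric]
    by (intro sum.cong refl) (auto simp: Px_def Pmy_def Py_def add_divide_distrib)
  also have "norm \<dots> \<le> 6 * L1norm (Py h) + 6 * L1norm (Pmy (Px h))"
    by (intro norm_triangle_le add_mono norm_antidiag_functional_le trig_poly_Px trig_poly_Pmy
        trig_poly_Py h) (auto simp: Px_def Pmy_def Py_def)
  also have "\<dots> \<le> 6 * norm_y h"
    using L1norm_nonneg[of "Pmy (Pmx h)"] by (simp add: norm_y_def)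
  finally show ?thesis .
qed

lemma norm_antidiag_functional_le_triple_norm:
  assumes f: "trig_poly f"
  shows "norm (antidiag_functional N f) \<le> 6 * triple_norm f"
proof -
  have "norm (antidiag_functional N f) / 6 \<le> triple_norm f"
    unfolding triple_norm_def
  proof (rule cInf_greatest)
    have "trig_poly (\<lambda>_. 0)"
      by (simp add: trig_poly_def)
    then show "{norm_x g + norm_y h |g h. trig_poly g \<and> trig_poly h \<and> f = (\<lambda>k. g k + h k)} \<noteq> {}"
      using f by fastforce
  next
    fix r assume "r \<in> {norm_x g + norm_y h |g h. trig_poly g \<and> trig_poly h \<and> f = (\<lambda>k. g k + h k)}"
    then obtain g h where g: "trig_poly g" and h: "trig_poly h" and f_eq: "f = (\<lambda>k. g k + h k)"
      and r: "r = norm_x g + norm_y h"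
      by blast
    have "norm (antidiag_functional N f) \<le> norm (antidiag_functional N g) + norm (antidiag_functional N h)"
      unfolding f_eq antidiag_functional_add by (rule norm_triangle_ineq)
    also have "\<dots> \<le> 6 * r"
      using norm_antidiag_functional_le_norm_x[OF g, of N] norm_antidiag_functional_le_norm_y[OF h, of N]
      by (simp add: r)
    finally show "norm (antidiag_functional N f) / 6 \<le> r"
      by simp
  qed
  then show ?thesis
    by simp
qed

section \<open>The autocorrelation of an antidiagonal segment\<close>

definition autocorr :: "(int \<times> int) set \<Rightarrow> tpoly" where
  "autocorr S k = of_nat (card {ab \<in> S \<times> S. fst ab - snd ab = k})"

lemma torus_char_diff: "torus_char (a - b) p = torus_char a p * cnj (torus_char b p)"
  by (simp add: torus_char_def exp_cnj exp_add[symmetric] algebra_simps)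

lemma supp_autocorr: "supp (autocorr S) \<subseteq> (\<lambda>ab. fst ab - snd ab) ` (S \<times> S)"
proof
  fix k assume "k \<in> supp (autocorr S)"
  then have "{ab \<in> S \<times> S. fst ab - snd ab = k} \<noteq> {}"
    by (intro notI) (simp add: autocorr_def)
  then show "k \<in> (\<lambda>ab. fst ab - snd ab) ` (S \<times> S)"
    by blast
qed

lemma trig_poly_autocorr: "finite S \<Longrightarrow> trig_poly (autocorr S)"
  unfolding trig_poly_def by (rule finite_subset[OF supp_autocorr]) simp

lemma tp_eval_autocorr:
  assumes S: "finite S"
  shows "tp_eval (autocorr S) p = of_real ((norm (\<Sum>a\<in>S. torus_char a p))\<^sup>2)"
proof -
  define D where "D = (\<lambda>ab. fst ab - snd ab) ` (S \<times> S)"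
  define A where "A k = {ab \<in> S \<times> S. fst ab - snd ab = k}" for k
  have D: "finite D"
    using S by (simp add: D_def)
  have "tp_eval (autocorr S) p = (\<Sum>k\<in>D. of_nat (card (A k)) * torus_char k p)"
    unfolding tp_eval_eq_sum[OF D supp_autocorr[of S, folded D_def]] autocorr_def A_def ..
  also have "\<dots> = (\<Sum>k\<in>D. \<Sum>ab\<in>A k. torus_char (fst ab - snd ab) p)"
  proof (intro sum.cong refl)
    fix k
    have "(\<Sum>ab\<in>A k. torus_char (fst ab - snd ab) p) = (\<Sum>ab\<in>A k. torus_char k p)"
      by (intro sum.cong) (auto simp: A_def)
    then show "of_nat (card (A k)) * torus_char k p = (\<Sum>ab\<in>A k. torus_char (fst ab - snd ab) p)"
      by simp
  qed
  also have "\<dots> = (\<Sum>ab\<in>S \<times> S. torus_char (fst ab - snd ab) p)"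
    unfolding A_def by (rule sum.group) (use S D in \<open>auto simp: D_def\<close>)
  also have "\<dots> = (\<Sum>a\<in>S. torus_char a p) * cnj (\<Sum>b\<in>S. torus_char b p)"
    by (simp add: sum.cartesian_product case_prod_beta sum_product cnj_sum torus_char_diff)
  also have "\<dots> = of_real ((norm (\<Sum>a\<in>S. torus_char a p))\<^sup>2)"
    by (rule complex_norm_square[symmetric])
  finally show ?thesis .
qed

lemma autocorr_zero: "autocorr S (0,0) = of_nat (card S)"
proof -
  have "{ab \<in> S \<times> S. fst ab - snd ab = (0,0)} = (\<lambda>a. (a, a)) ` S"
    by (auto simp: zero_prod_def[symmetric])
  then show ?thesis
    by (simp add: autocorr_def card_image inj_on_def)
qed

lemma L1norm_autocorr: "finite S \<Longrightarrow> L1norm (autocorr S) = card S"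
  by (simp add: L1norm_eq_coeff_zero_if_nonneg trig_poly_autocorr tp_eval_autocorr autocorr_zero
      norm_power)

definition antidiag_segment :: "nat \<Rightarrow> (int \<times> int) set" where
  "antidiag_segment N = (\<lambda>m. (m, - m)) ` {0..int N}"

lemma finite_antidiag_segment: "finite (antidiag_segment N)"
  by (simp add: antidiag_segment_def)

lemma card_antidiag_segment: "card (antidiag_segment N) = N + 1"
  by (simp add: antidiag_segment_def card_image inj_on_def)

lemma autocorr_antidiag_segment_antidiagonal:
  assumes "autocorr (antidiag_segment N) (m, n) \<noteq> 0"
  shows "n = - m"
proof -
  have "{ab \<in> antidiag_segment N \<times> antidiag_segment N. fst ab - snd ab = (m, n)} \<noteq> {}"
    using assms by (intro notI) (simp add: autocorr_def)
  then show ?thesis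
    by (auto simp: antidiag_segment_def)
qed

lemma card_antidiag_segment_differences_ge:
  assumes "d \<le> N"
  shows "N + 1 - d
    \<le> card {ab \<in> antidiag_segment N \<times> antidiag_segment N. fst ab - snd ab = (int d, - int d)}"
proof -
  define pair where "pair j = ((j + int d, - (j + int d)), (j, - j))" for j :: int
  have sub: "pair ` {0..int N - int d}
      \<subseteq> {ab \<in> antidiag_segment N \<times> antidiag_segment N. fst ab - snd ab = (int d, - int d)}"
    by (auto simp: pair_def antidiag_segment_def image_iff)
  have "N + 1 - d = card (pair ` {0..int N - int d})"
    using assms by (simp add: card_image inj_on_def pair_def)
  also have "\<dots> \<le> card {ab \<in> antidiag_segment N \<times> antidiag_segment N. fst ab - snd ab = (int d, - int d)}"
    by (rule card_mono[OF _ sub]) (simp add: finite_antidiag_segment)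
  finally show ?thesis .
qed

lemma norm_antidiag_functional_autocorr_ge:
  "real (N + 1) * (harm N - 1) \<le> norm (antidiag_functional N (autocorr (antidiag_segment N)))"
proof -
  define c where
    "c k = card {ab \<in> antidiag_segment N \<times> antidiag_segment N. fst ab - snd ab = k}" for k
  have "real (N + 1) * (harm N - 1) \<le> real (N + 1) * harm N - real N"
    by (simp add: algebra_simps)
  also have "\<dots> = (\<Sum>j\<in>{1..N}. real (N + 1) / real j - 1)"
    by (simp add: harm_def sum_distrib_left sum_subtractf divide_inverse)
  also have "\<dots> = (\<Sum>j\<in>{1..N}. real (N + 1 - j) / real j)"
    by (intro sum.cong refl) (auto simp: of_nat_diff field_simps)
  also have "\<dots> \<le> (\<Sum>j\<in>{1..N}. real (c (int j, - int j) + c (- int j, int j)) / real j)"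
  proof (intro sum_mono divide_right_mono)
    fix j assume "j \<in> {1..N}"
    then have "N + 1 - j \<le> c (int j, - int j)"
      unfolding c_def by (intro card_antidiag_segment_differences_ge) auto
    then show "real (N + 1 - j) \<le> real (c (int j, - int j) + c (- int j, int j))"
      by simp
  qed simp
  also have "\<dots> = Re (antidiag_functional N (autocorr (antidiag_segment N)))"
    by (simp add: antidiag_functional_def autocorr_def c_def Re_sum)
  also have "\<dots> \<le> norm (antidiag_functional N (autocorr (antidiag_segment N)))"
    by (rule complex_Re_le_cmod)
  finally show ?thesis .
qed

theorem mainTheorem3:
  fixes \<epsilon> :: real
  assumes "\<epsilon> > 0"
  shows "\<exists>f. trig_poly f \<and> f \<noteq> (\<lambda>_. 0) \<and>
           L1norm (Px (Py f)) + L1norm (\<lambda>k. f k - Px (Py f) k) \<le> \<epsilon> * triple_norm f"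
proof -
  obtain N where "18 / \<epsilon> + 1 \<le> harm N"
    using harm_at_top by (auto simp: filterlim_at_top eventually_sequentially)
  then have N: "18 \<le> \<epsilon> * (harm N - 1)"
    using assms by (simp add: field_simps)
  define f where "f = autocorr (antidiag_segment N)"
  have f: "trig_poly f"
    by (simp add: f_def trig_poly_autocorr finite_antidiag_segment)
  have "f (0,0) \<noteq> 0"
    unfolding f_def autocorr_zero card_antidiag_segment of_nat_eq_0_iff by simp
  then have nonzero: "f \<noteq> (\<lambda>_. 0)"
    by auto
  have "L1norm (Px (Py f)) + L1norm (\<lambda>k. f k - Px (Py f) k) \<le> 3 * L1norm f"
    using f autocorr_antidiag_segment_antidiagonal unfolding f_def
    by (rule L1norm_Px_Py_antidiagonal_le)
  also have "\<dots> = 3 * real (N + 1)"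
    by (simp add: f_def L1norm_autocorr finite_antidiag_segment card_antidiag_segment)
  also have "\<dots> \<le> \<epsilon> * (real (N + 1) * (harm N - 1)) / 6"
    using mult_right_mono[OF N, of "real (N + 1)"] by (simp add: algebra_simps)
  also have "\<dots> \<le> \<epsilon> * triple_norm f"
    using norm_antidiag_functional_autocorr_ge[of N] norm_antidiag_functional_le_triple_norm[OF f, of N]
      assms
    by (simp add: f_def)
  finally show ?thesis
    using f nonzero by blast
qed

end
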